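(* Let $\alpha>0$, $\mathfrak r\ge0$, $\eta:=\mathfrak r/\alpha$, and $L(\rho)=L_0+L_1\rho$ with $L_0\ge0$, $L_1>0$. For $\rho>0$ let $p(\rho):=\eta+\frac12\alpha^{-2}L(\rho)\rho^2-\rho$, $q(\rho):=\alpha^{-1}L(\rho)\rho$, call $\rho$ admissible ($\mathsf{Adm}(\rho)$) if $p(\rho)\le0$ and $q(\rho)<1$, and let $\mathcal{AD}:=\{\rho>0:\mathsf{Adm}(\rho)\}$. Assume $\mathcal{AD}\neq\emptyset$ and let $\rho_+:=\sup\mathcal{AD}$. Consider the bisection procedure: starting from $0<\rho_{\rm low}^{(0)}<\rho_{\rm up}^{(0)}$ with $\mathsf{Adm}(\rho_{\rm low}^{(0)})$ true and $\mathsf{Adm}(\rho_{\rm up}^{(0)})$ false, repeat $k_{\max}$ times: set $\rho_{\rm mid}:=(\rho_{\rm low}+\rho_{\rm up})/2$; if $\mathsf{Adm}(\rho_{\rm mid})$ then $\rho_{\rm low}\gets\rho_{\rm mid}$, else $\rho_{\rm up}\gets\rho_{\rm mid}$; finally return $\rho_{\rm low}$. Then every iteration preserves $\mathsf{Adm}(\rho_{\rm low})$ true and $\mathsf{Adm}(\rho_{\rm up})$ false, and the returned $\rho_{\rm low}$ is admissible and satisfies $$\rho_{\rm low}\le\rho_+\le\rho_{\rm up},\qquad \rho_{\rm up}-\rho_{\rm low}\le2^{-k_{\max}}\bigl(\rho_{\rm up}^{(0)}-\rho_{\rm low}^{(0)}\bigr).$$ Furthermore, consider the preceding shrinking phase: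 test $\rho=2\eta$; if inadmissible, set $\rho_{\rm up}:=2\eta$ and for $j=1,\dots,j_{\max}$ set $\rho_{\rm low}:=\rho_{\rm up}/2$, stop if $\mathsf{Adm}(\rho_{\rm low})$, otherwise $\rho_{\rm up}:=\rho_{\rm low}$; return fail if the last tested $\rho_{\rm low}$ is inadmissible. If this phase returns fail, then $\mathsf{Adm}(2\eta/2^j)$ is false for every $j=0,1,\dots,j_{\max}$. *)

theory Defs
  imports Complex_Main
begin

definition Lfun :: "real \<Rightarrow> real \<Rightarrow> real \<Rightarrow> real" where
  "Lfun L0 L1 \<rho> = L0 + L1 * \<rho>"

definition pfun :: "real \<Rightarrow> real \<Rightarrow> real \<Rightarrow> real \<Rightarrow> real \<Rightarrow> real" where
  "pfun \<alpha> r L0 L1 \<rho> = r / \<alpha> + (1/2) * \<alpha> powi (-2) * Lfun L0 L1 \<rho> * \<rho>^2 - \<rho>"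

definition qfun :: "real \<Rightarrow> real \<Rightarrow> real \<Rightarrow> real \<Rightarrow> real" where
  "qfun \<alpha> L0 L1 \<rho> = inverse \<alpha> * Lfun L0 L1 \<rho> * \<rho>"

definition Adm :: "real \<Rightarrow> real \<Rightarrow> real \<Rightarrow> real \<Rightarrow> real \<Rightarrow> bool" where
  "Adm \<alpha> r L0 L1 \<rho> \<longleftrightarrow> \<rho> > 0 \<and> pfun \<alpha> r L0 L1 \<rho> \<le> 0 \<and> qfun \<alpha> L0 L1 \<rho> < 1"

definition AD :: "real \<Rightarrow> real \<Rightarrow> real \<Rightarrow> real \<Rightarrow> real set" where
  "AD \<alpha> r L0 L1 = {\<rho>. \<rho> > 0 \<and> Adm \<alpha> r L0 L1 \<rho>}"

fun bisect :: "(real \<Rightarrow> bool) \<Rightarrow> nat \<Rightarrow> real \<Rightarrow> real \<Rightarrow> real \<times> real" where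
  "bisect A 0 lo up = (lo, up)"
| "bisect A (Suc k) lo up =
     (let (l, u) = bisect A k lo up; m = (l + u) / 2
      in if A m then (m, u) else (l, m))"

datatype shrink_result = Shrink_Adm real | Shrink_Bracket real real | Shrink_Fail

fun shrink_loop :: "(real \<Rightarrow> bool) \<Rightarrow> nat \<Rightarrow> real \<Rightarrow> shrink_result" where
  "shrink_loop A 0 up = Shrink_Fail"
| "shrink_loop A (Suc n) up =
     (let lo = up / 2 in if A lo then Shrink_Bracket lo up else shrink_loop A n lo)"

definition shrink_phase :: "(real \<Rightarrow> bool) \<Rightarrow> real \<Rightarrow> nat \<Rightarrow> shrink_result" where
  "shrink_phase A \<eta> jmax =
     (if A (2 * \<eta>) then Shrink_Adm (2 * \<eta>) else shrink_loop A jmax (2 * \<eta>))"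

end

theory Submission imports Defs "HOL-Analysis.Analysis" begin

text \<open>Both p and q are cubic polynomials with nonnegative quadratic and cubic coefficients, hence
convex on the half-line, so the admissible set is an intersection of sublevel sets of convex functions,
i.e. an interval; the bound q < 1 also keeps it bounded. Bisection between an admissible and an
inadmissible point preserves that bracket, so the supremum of the interval stays between the two
endpoints while their distance halves.\<close>

lemma convex_on_cubic:
  fixes a b c d :: real
  assumes "0 \<le> b" "0 \<le> c"
  shows "convex_on {0..} (\<lambda>x. d + a * x + b * x\<^sup>2 + c * x ^ 3)"
proof (rule f''_ge0_imp_convex)
  show "((\<lambda>x. d + a * x + b * x\<^sup>2 + c * x ^ 3) has_real_derivative a + 2 * b * x + 3 * c * x\<^sup>2) (at x)"
    for x :: real
    by (rule derivative_eq_intros | simp add: power2_eq_square)+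
  show "((\<lambda>x. a + 2 * b * x + 3 * c * x\<^sup>2) has_real_derivative 2 * b + 6 * c * x) (at x)" for x :: real
    by (rule derivative_eq_intros | simp)+
qed (use assms in auto)

lemma convex_sublevel_le:
  assumes "convex_on S f"
  shows "convex {x \<in> S. f x \<le> t}"
proof (rule convexI)
  fix x y and u v :: real
  assume x: "x \<in> {x \<in> S. f x \<le> t}" and y: "y \<in> {x \<in> S. f x \<le> t}"
    and uv: "0 \<le> u" "0 \<le> v" "u + v = 1"
  have "f (u *\<^sub>R x + v *\<^sub>R y) \<le> u * f x + v * f y"
    using assms x y uv by (auto simp: convex_on_def)
  also have "\<dots> \<le> u * t + v * t"
    using x y uv by (intro add_mono mult_left_mono) auto
  finally show "u *\<^sub>R x + v *\<^sub>R y \<in> {x \<in> S. f x \<le> t}"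
    using assms x y uv by (auto simp: convex_on_def convexD distrib_right[symmetric])
qed

lemma convex_sublevel_less:
  assumes "convex_on S f"
  shows "convex {x \<in> S. f x < t}"
proof (rule convexI)
  fix x y and u v :: real
  assume x: "x \<in> {x \<in> S. f x < t}" and y: "y \<in> {x \<in> S. f x < t}"
    and uv: "0 \<le> u" "0 \<le> v" "u + v = 1"
  have "f (u *\<^sub>R x + v *\<^sub>R y) \<le> u * f x + v * f y"
    using assms x y uv by (auto simp: convex_on_def)
  also have "\<dots> < u * t + v * t"
  proof (cases "u = 0")
    case True then show ?thesis using y uv by simp
  next
    case False then show ?thesis using x y uv
      by (intro add_less_le_mono mult_strict_left_mono mult_left_mono) auto
  qed
  finally show "u *\<^sub>R x + v *\<^sub>R y \<in> {x \<in> S. f x < t}"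
    using assms x y uv by (auto simp: convex_on_def convexD distrib_right[symmetric])
qed

lemma convex_AD:
  assumes "\<alpha> > 0" "L0 \<ge> 0" "L1 \<ge> 0"
  shows "convex (AD \<alpha> r L0 L1)"
proof -
  have "pfun \<alpha> r L0 L1 = (\<lambda>x. r / \<alpha> + (- 1) * x + (\<alpha> powi (-2) * L0 / 2) * x\<^sup>2 + (\<alpha> powi (-2) * L1 / 2) * x ^ 3)"
    by (auto simp: pfun_def Lfun_def algebra_simps power2_eq_square power3_eq_cube)
  moreover have "0 \<le> \<alpha> powi (-2)"
    by (simp add: power_int_minus)
  ultimately have p: "convex_on {0..} (pfun \<alpha> r L0 L1)"
    using assms by (simp only:) (intro convex_on_cubic; simp)
  have "qfun \<alpha> L0 L1 = (\<lambda>x. 0 + (L0 / \<alpha>) * x + (L1 / \<alpha>) * x\<^sup>2 + 0 * x ^ 3)"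
    using assms by (intro ext) (simp add: qfun_def Lfun_def field_simps power2_eq_square)
  then have q: "convex_on {0..} (qfun \<alpha> L0 L1)"
    using assms by (simp only:) (intro convex_on_cubic; simp)
  have "AD \<alpha> r L0 L1 = {0<..} \<inter> {x \<in> {0..}. pfun \<alpha> r L0 L1 x \<le> 0} \<inter> {x \<in> {0..}. qfun \<alpha> L0 L1 x < 1}"
    by (auto simp: AD_def Adm_def)
  then show ?thesis
    using convex_sublevel_le[OF p] convex_sublevel_less[OF q] by (simp add: convex_Int)
qed

lemma bdd_above_AD:
  assumes "\<alpha> > 0" "L0 \<ge> 0" "L1 > 0"
  shows "bdd_above (AD \<alpha> r L0 L1)"
proof (rule bdd_aboveI)
  fix x assume "x \<in> AD \<alpha> r L0 L1"
  then have "x > 0" "(L0 + L1 * x) * x < \<alpha>"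
    using assms by (auto simp: AD_def Adm_def qfun_def Lfun_def field_simps)
  then have "x\<^sup>2 < \<alpha> / L1"
    using assms by (simp add: field_simps power2_eq_square) (smt (verit) mult_nonneg_nonneg)
  then show "x \<le> sqrt (\<alpha> / L1)"
    using real_less_rsqrt by fastforce
qed

lemma is_interval_Sup_bracket:
  fixes S :: "real set"
  assumes "is_interval S" "bdd_above S" "lo \<in> S" "up \<notin> S" "lo \<le> up"
  shows "lo \<le> Sup S" "Sup S \<le> up"
proof -
  show "lo \<le> Sup S"
    by (rule cSup_upper[OF assms(3,2)])
  have "x \<le> up" if "x \<in> S" for x
  proof (rule ccontr)
    assume "\<not> x \<le> up"
    then have "up \<in> S"
      using assms(1,3,5) that unfolding is_interval_1 by (meson nle_le)
    with assms(4) show False ..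
  qed
  then show "Sup S \<le> up"
    using assms(3) by (intro cSup_least) auto
qed

lemma bisect_width: "snd (bisect A k lo up) - fst (bisect A k lo up) = (up - lo) / 2 ^ k"
  by (induction k) (auto simp: split_def Let_def field_simps)

lemma bisect_bracket:
  assumes "A lo" "\<not> A up"
  shows "A (fst (bisect A k lo up)) \<and> \<not> A (snd (bisect A k lo up))"
  using assms by (induction k) (auto simp: split_def Let_def)

lemma shrink_loop_Fail:
  "shrink_loop A n up = Shrink_Fail \<Longrightarrow> 0 < j \<Longrightarrow> j \<le> n \<Longrightarrow> \<not> A (up / 2 ^ j)"
proof (induction n arbitrary: up j)
  case (Suc n)
  then have "\<not> A (up / 2)" "shrink_loop A n (up / 2) = Shrink_Fail"
    by (auto simp: Let_def split: if_splits)
  with Suc show ?case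
    by (cases "j = 1") (auto simp: gr0_conv_Suc field_simps dest!: Suc.IH[of "up / 2" "j - 1"])
qed simp

lemma shrink_phase_Fail:
  "shrink_phase A \<eta> n = Shrink_Fail \<Longrightarrow> j \<le> n \<Longrightarrow> \<not> A (2 * \<eta> / 2 ^ j)"
  by (cases "j = 0") (auto simp: shrink_phase_def dest: shrink_loop_Fail split: if_splits)

theorem propositionA2:
  fixes \<alpha> r L0 L1 lo0 up0 :: real and kmax jmax :: nat
  assumes "\<alpha> > 0" and "r \<ge> 0" and "L0 \<ge> 0" and "L1 > 0"
    and "AD \<alpha> r L0 L1 \<noteq> {}"
  shows "(0 < lo0 \<and> lo0 < up0 \<and> Adm \<alpha> r L0 L1 lo0 \<and> \<not> Adm \<alpha> r L0 L1 up0 \<longrightarrow>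
           (\<forall>k\<le>kmax. Adm \<alpha> r L0 L1 (fst (bisect (Adm \<alpha> r L0 L1) k lo0 up0))
                     \<and> \<not> Adm \<alpha> r L0 L1 (snd (bisect (Adm \<alpha> r L0 L1) k lo0 up0)))
         \<and> (let (lo, up) = bisect (Adm \<alpha> r L0 L1) kmax lo0 up0 in
              Adm \<alpha> r L0 L1 lo \<and> lo \<le> Sup (AD \<alpha> r L0 L1) \<and> Sup (AD \<alpha> r L0 L1) \<le> up
              \<and> up - lo \<le> (up0 - lo0) / 2 ^ kmax))
       \<and> (shrink_phase (Adm \<alpha> r L0 L1) (r / \<alpha>) jmax = Shrink_Fail \<longrightarrow>
           (\<forall>j\<le>jmax. \<not> Adm \<alpha> r L0 L1 (2 * (r / \<alpha>) / 2 ^ j)))"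
proof (intro conjI impI)
  let ?A = "Adm \<alpha> r L0 L1" and ?S = "AD \<alpha> r L0 L1"
  assume "0 < lo0 \<and> lo0 < up0 \<and> ?A lo0 \<and> \<not> ?A up0"
  then have "lo0 < up0" and bracket: "?A lo0" "\<not> ?A up0"
    by auto
  then show "\<forall>k\<le>kmax. ?A (fst (bisect ?A k lo0 up0)) \<and> \<not> ?A (snd (bisect ?A k lo0 up0))"
    using bisect_bracket by blast
  obtain lo up where lo_up: "bisect ?A kmax lo0 up0 = (lo, up)"
    by fastforce
  have lo: "?A lo" and up: "\<not> ?A up"
    using bisect_bracket[OF bracket, of kmax] lo_up by auto
  have width: "up - lo = (up0 - lo0) / 2 ^ kmax"
    using bisect_width[of ?A kmax lo0 up0] lo_up by simp
  moreover have "0 \<le> (up0 - lo0) / 2 ^ kmax"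
    using \<open>lo0 < up0\<close> by simp
  ultimately have "lo \<le> up"
    by linarith
  moreover have "is_interval ?S" "bdd_above ?S"
    using assms convex_AD bdd_above_AD by (auto simp: is_interval_convex_1)
  moreover have "?S = Collect ?A"
    by (auto simp: AD_def Adm_def)
  ultimately have "lo \<le> Sup ?S" "Sup ?S \<le> up"
    using lo up is_interval_Sup_bracket[of ?S lo up] by simp_all
  with lo width lo_up show "let (lo, up) = bisect ?A kmax lo0 up0 in
      ?A lo \<and> lo \<le> Sup ?S \<and> Sup ?S \<le> up \<and> up - lo \<le> (up0 - lo0) / 2 ^ kmax"
    by simp
next
  assume "shrink_phase (Adm \<alpha> r L0 L1) (r / \<alpha>) jmax = Shrink_Fail"
  then show "\<forall>j\<le>jmax. \<not> Adm \<alpha> r L0 L1 (2 * (r / \<alpha>) / 2 ^ j)"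
    using shrink_phase_Fail by blast
qed

end
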